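(* Let $\mathcal{R}=(W,\unlhd)$ be a poset regarded as a category (with an arrow $w\to v$ iff $w\unlhd v$), and let $\mathbf{Set}^{\mathcal{R}}$ be the topos of covariant presheaves on $\mathcal{R}$. Then $\mathbf{Set}^{\mathcal{R}}$ is scattered if and only if there is no infinite strictly ascending chain $w_0\lhd w_1\lhd w_2\lhd\cdots$ in $W$ (equivalently, the Alexandroff topology on $W$ whose opens are the $\unlhd$-upward closed sets is scattered), where $\lhd$ is the strict part of $\unlhd$.
   Context: An elementary topos with subobject classifier $\Omega$ is scattered if, in its Mitchell–Bénabou internal language, $\forall p{:}\Omega.((\divideontimes p\Rightarrow p)\Rightarrow p)$ is valid, where $\divideontimes p:=\forall t{:}\Omega.(t\vee(t\Rightarrow p))$. A topological space is scattered if each nonempty subset has an isolated point. *)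

theory Defs
  imports Main
begin

definition poset_on :: "'a set \<Rightarrow> ('a \<Rightarrow> 'a \<Rightarrow> bool) \<Rightarrow> bool" where
  "poset_on W le \<longleftrightarrow>
     (\<forall>x\<in>W. le x x) \<and>
     (\<forall>x\<in>W. \<forall>y\<in>W. le x y \<and> le y x \<longrightarrow> x = y) \<and>
     (\<forall>x\<in>W. \<forall>y\<in>W. \<forall>z\<in>W. le x y \<and> le y z \<longrightarrow> le x z)"

definition up :: "'a set \<Rightarrow> ('a \<Rightarrow> 'a \<Rightarrow> bool) \<Rightarrow> 'a \<Rightarrow> 'a set" where
  "up W le w = {v\<in>W. le w v}"

text \<open>The subobject classifier Omega of the covariant presheaf topos Set^R:
  Omega(w) is the set of cosieves on w, i.e. up-closed subsets of the up-set of w.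
  Restriction along w <= v is intersection with up v.\<close>
definition Omega :: "'a set \<Rightarrow> ('a \<Rightarrow> 'a \<Rightarrow> bool) \<Rightarrow> 'a \<Rightarrow> 'a set set" where
  "Omega W le w = {S. S \<subseteq> up W le w \<and> (\<forall>x\<in>S. \<forall>y\<in>W. le x y \<longrightarrow> y \<in> S)}"

text \<open>Formulas of the Mitchell-Benabou language built from variables of type Omega
  (variables are named by natural numbers), with quantification over Omega.\<close>
datatype form =
    Var nat
  | Top
  | Bot
  | Conj form form
  | Disj form form
  | Imp form form
  | AllO nat form

text \<open>Kripke-Joyal forcing in the presheaf topos Set^R; an environment assigns to
  each variable an element of Omega at the current stage.  A variable p (a generalized
  element of Omega at stage w) is forced at w iff it equals the top cosieve, i.e. w \<in> p.\<close>
fun forces :: "'a set \<Rightarrow> ('a \<Rightarrow> 'a \<Rightarrow> bool) \<Rightarrow> 'a \<Rightarrow> (nat \<Rightarrow> 'a set) \<Rightarrow> form \<Rightarrow> bool" where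
  "forces W le w \<rho> (Var x) = (w \<in> \<rho> x)"
| "forces W le w \<rho> Top = True"
| "forces W le w \<rho> Bot = False"
| "forces W le w \<rho> (Conj \<phi> \<psi>) = (forces W le w \<rho> \<phi> \<and> forces W le w \<rho> \<psi>)"
| "forces W le w \<rho> (Disj \<phi> \<psi>) = (forces W le w \<rho> \<phi> \<or> forces W le w \<rho> \<psi>)"
| "forces W le w \<rho> (Imp \<phi> \<psi>) =
     (\<forall>v\<in>W. le w v \<longrightarrow>
        forces W le v (\<lambda>x. \<rho> x \<inter> up W le v) \<phi> \<longrightarrow>
        forces W le v (\<lambda>x. \<rho> x \<inter> up W le v) \<psi>)"
| "forces W le w \<rho> (AllO n \<phi>) =
     (\<forall>v\<in>W. le w v \<longrightarrow> (\<forall>S\<in>Omega W le v.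
        forces W le v ((\<lambda>x. \<rho> x \<inter> up W le v)(n := S)) \<phi>))"

definition valid :: "'a set \<Rightarrow> ('a \<Rightarrow> 'a \<Rightarrow> bool) \<Rightarrow> form \<Rightarrow> bool" where
  "valid W le \<phi> \<longleftrightarrow>
     (\<forall>w\<in>W. \<forall>\<rho>. (\<forall>x. \<rho> x \<in> Omega W le w) \<longrightarrow> forces W le w \<rho> \<phi>)"

text \<open>star p := forall t:Omega. (t \<or> (t \<Rightarrow> p)); here p is variable 0, t is variable 1.\<close>
definition star0 :: form where
  "star0 = AllO 1 (Disj (Var 1) (Imp (Var 1) (Var 0)))"

definition scattered_axiom :: form where
  "scattered_axiom = AllO 0 (Imp (Imp star0 (Var 0)) (Var 0))"

definition presheaf_topos_scattered :: "'a set \<Rightarrow> ('a \<Rightarrow> 'a \<Rightarrow> bool) \<Rightarrow> bool" where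
  "presheaf_topos_scattered W le \<longleftrightarrow> valid W le scattered_axiom"

end

theory Submission
  imports Defs
begin

text \<open>Testing t against the cosieve of stages strictly above u shows
  that \<open>star p\<close> is forced at u iff p holds strictly above u, so the scatteredness axiom says
  exactly that every progressive cosieve contains u: induction along the converse of the
  strict order. That induction principle holds iff the relation is well-founded, i.e. iff
  there is no infinite strictly ascending chain; a chain f refutes it with the cosieve of
  stages lying above no f n.\<close>

definition strict_up :: "'a set \<Rightarrow> ('a \<Rightarrow> 'a \<Rightarrow> bool) \<Rightarrow> 'a \<Rightarrow> 'a set" where
  "strict_up W le w = {v \<in> W. le w v \<and> v \<noteq> w}"

definition progressive_from :: "'a set \<Rightarrow> ('a \<Rightarrow> 'a \<Rightarrow> bool) \<Rightarrow> 'a \<Rightarrow> 'a set \<Rightarrow> bool" where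
  "progressive_from W le u P \<longleftrightarrow> (\<forall>v\<in>W. le u v \<longrightarrow> strict_up W le v \<subseteq> P \<longrightarrow> v \<in> P)"

definition strict_ascending_chain :: "'a set \<Rightarrow> ('a \<Rightarrow> 'a \<Rightarrow> bool) \<Rightarrow> (nat \<Rightarrow> 'a) \<Rightarrow> bool" where
  "strict_ascending_chain W le f \<longleftrightarrow> (\<forall>n. f n \<in> W \<and> le (f n) (f (Suc n)) \<and> f n \<noteq> f (Suc n))"

lemma poset_on_refl: "poset_on W le \<Longrightarrow> x \<in> W \<Longrightarrow> le x x"
  unfolding poset_on_def by blast

lemma poset_on_antisym:
  "poset_on W le \<Longrightarrow> x \<in> W \<Longrightarrow> y \<in> W \<Longrightarrow> le x y \<Longrightarrow> le y x \<Longrightarrow> x = y"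
  unfolding poset_on_def by blast

lemma poset_on_trans:
  "poset_on W le \<Longrightarrow> x \<in> W \<Longrightarrow> y \<in> W \<Longrightarrow> z \<in> W \<Longrightarrow> le x y \<Longrightarrow> le y z \<Longrightarrow> le x z"
  unfolding poset_on_def by blast

lemma mem_up_self: "poset_on W le \<Longrightarrow> w \<in> W \<Longrightarrow> w \<in> up W le w"
  unfolding up_def by (simp add: poset_on_refl)

lemma strict_up_subset_up: "strict_up W le w \<subseteq> up W le w"
  unfolding strict_up_def up_def by blast

lemma up_in_Omega:
  assumes po: "poset_on W le" and w: "w \<in> W"
  shows "up W le w \<in> Omega W le w"
  unfolding Omega_def up_def using poset_on_trans[OF po w] by blast

lemma strict_up_in_Omega:
  assumes po: "poset_on W le" and w: "w \<in> W"
  shows "strict_up W le w \<in> Omega W le w"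
proof -
  have "y \<in> strict_up W le w" if x: "x \<in> strict_up W le w" and y: "y \<in> W" "le x y" for x y
  proof -
    from x have x': "x \<in> W" "le w x" "x \<noteq> w" unfolding strict_up_def by auto
    have "le w y" using poset_on_trans[OF po w x'(1) y(1) x'(2) y(2)] .
    moreover have "y \<noteq> w"
    proof
      assume "y = w"
      with y(2) have "le x w" by simp
      then have "w = x" by (rule poset_on_antisym[OF po w x'(1) x'(2)])
      with x'(3) show False by simp
    qed
    ultimately show ?thesis using y unfolding strict_up_def by blast
  qed
  with strict_up_subset_up[of W le w] show ?thesis unfolding Omega_def by blast
qed

lemma Omega_restrict:
  assumes po: "poset_on W le" and u: "u \<in> W" and "P \<in> Omega W le v"
  shows "P \<inter> up W le u \<in> Omega W le u"
  using assms(3) poset_on_trans[OF po u] unfolding Omega_def up_def by blast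

lemma progressive_from_Int_up:
  assumes po: "poset_on W le" and u: "u \<in> W"
  shows "progressive_from W le u (P \<inter> up W le u) \<longleftrightarrow> progressive_from W le u P"
proof -
  have "strict_up W le v \<subseteq> up W le u" if "v \<in> W" "le u v" for v
    using that poset_on_trans[OF po u] unfolding strict_up_def up_def by blast
  then show ?thesis
    unfolding progressive_from_def up_def by blast
qed

lemma forces_star0_iff:
  assumes po: "poset_on W le" and u: "u \<in> W"
  shows "forces W le u \<sigma> star0 \<longleftrightarrow> strict_up W le u \<subseteq> \<sigma> 0"
proof
  assume "forces W le u \<sigma> star0"
  then have "\<forall>v\<in>W. le u v \<longrightarrow> (\<forall>S\<in>Omega W le v. v \<in> S \<or>
      (\<forall>v'\<in>W. le v v' \<longrightarrow> v' \<in> S \<and> v' \<in> up W le v' \<longrightarrow> v' \<in> \<sigma> 0 \<and> v' \<in> up W le v))"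
    by (simp add: star0_def)
  from this[rule_format, OF u poset_on_refl[OF po u] strict_up_in_Omega[OF po u]]
  show "strict_up W le u \<subseteq> \<sigma> 0"
    using mem_up_self[OF po] by (auto simp: strict_up_def)
next
  assume strict: "strict_up W le u \<subseteq> \<sigma> 0"
  have "v' \<in> \<sigma> 0"
    if v: "v \<in> W" "le u v" and "v \<notin> S" and v': "v' \<in> W" "le v v'" "v' \<in> S" for v v' S
  proof -
    have "v' \<noteq> v" using \<open>v \<notin> S\<close> \<open>v' \<in> S\<close> by blast
    then have "v' \<noteq> u"
      using poset_on_antisym[OF po v(1) u] v v' by blast
    moreover have "le u v'" using poset_on_trans[OF po u v(1) v'(1)] v v' by blast
    ultimately show ?thesis using strict v' unfolding strict_up_def by blast
  qed
  then show "forces W le u \<sigma> star0"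
    by (auto simp: star0_def up_def)
qed

lemma forces_Imp_star0_Var0_iff:
  assumes po: "poset_on W le"
  shows "forces W le u \<sigma> (Imp star0 (Var 0)) \<longleftrightarrow> progressive_from W le u (\<sigma> 0)"
proof -
  have "forces W le v (\<lambda>x. \<sigma> x \<inter> up W le v) star0 \<longleftrightarrow> strict_up W le v \<subseteq> \<sigma> 0"
    and "v \<in> \<sigma> 0 \<inter> up W le v \<longleftrightarrow> v \<in> \<sigma> 0" if "v \<in> W" for v
    using forces_star0_iff[OF po that, of "\<lambda>x. \<sigma> x \<inter> up W le v"]
      strict_up_subset_up[of W le v] mem_up_self[OF po that] by auto
  then show ?thesis
    unfolding progressive_from_def by simp
qed

lemma forces_scattered_axiom_iff:
  assumes po: "poset_on W le"
  shows "forces W le w \<rho> scattered_axiom \<longleftrightarrow>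
    (\<forall>v\<in>W. le w v \<longrightarrow> (\<forall>P\<in>Omega W le v. \<forall>u\<in>W. le v u \<longrightarrow>
       progressive_from W le u P \<longrightarrow> u \<in> P))"
  \<comment> \<open>unfold only the outer implication; the inner one is \<open>forces_Imp_star0_Var0_iff\<close>\<close>
  using mem_up_self[OF po]
  by (simp del: forces.simps(6)
      add: scattered_axiom_def forces.simps(6)[of _ _ _ _ "Imp star0 (Var 0)"]
        forces_Imp_star0_Var0_iff[OF po] progressive_from_Int_up[OF po])

lemma presheaf_topos_scattered_iff_progressive_induction:
  assumes po: "poset_on W le"
  shows "presheaf_topos_scattered W le \<longleftrightarrow>
    (\<forall>u\<in>W. \<forall>P\<in>Omega W le u. progressive_from W le u P \<longrightarrow> u \<in> P)"
proof (intro iffI ballI impI)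
  fix u P
  assume "presheaf_topos_scattered W le" and u: "u \<in> W"
    and "P \<in> Omega W le u" "progressive_from W le u P"
  moreover have "forces W le u (\<lambda>_. up W le u) scattered_axiom"
    using \<open>presheaf_topos_scattered W le\<close> u up_in_Omega[OF po u]
    unfolding presheaf_topos_scattered_def valid_def by simp
  ultimately show "u \<in> P"
    using u poset_on_refl[OF po u] unfolding forces_scattered_axiom_iff[OF po] by blast
next
  assume induction: "\<forall>u\<in>W. \<forall>P\<in>Omega W le u. progressive_from W le u P \<longrightarrow> u \<in> P"
  show "presheaf_topos_scattered W le"
    unfolding presheaf_topos_scattered_def valid_def forces_scattered_axiom_iff[OF po]
  proof (intro ballI allI impI)
    fix v P u
    assume "v \<in> W" "P \<in> Omega W le v" and u: "u \<in> W" "le v u"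
      and "progressive_from W le u P"
    then have "u \<in> P \<inter> up W le u"
      using induction Omega_restrict[OF po] progressive_from_Int_up[OF po] by blast
    then show "u \<in> P" by blast
  qed
qed

lemma progressive_induct:
  assumes po: "poset_on W le" and no_chain: "\<nexists>f. strict_ascending_chain W le f"
    and u: "u \<in> W" and progressive: "progressive_from W le u P"
  shows "u \<in> P"
proof -
  have "wf {(y, x). x \<in> W \<and> y \<in> W \<and> le x y \<and> x \<noteq> y}"
    using no_chain unfolding wf_iff_no_infinite_down_chain strict_ascending_chain_def by auto
  then have "x \<in> W \<longrightarrow> le u x \<longrightarrow> x \<in> P" for x
  proof induction
    case (less x)
    show ?case
    proof (intro impI)
      assume x: "x \<in> W" "le u x"
      then have "strict_up W le x \<subseteq> P"
        using less.IH poset_on_trans[OF po u x(1)] unfolding strict_up_def by blast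
      then show "x \<in> P" using progressive x unfolding progressive_from_def by blast
    qed
  qed
  then show ?thesis using u poset_on_refl[OF po u] by blast
qed

lemma strict_ascending_chain_refutes_progressive_induction:
  assumes po: "poset_on W le" and chain: "strict_ascending_chain W le f"
  defines "P \<equiv> {x \<in> up W le (f 0). \<forall>n. \<not> le x (f n)}"
  shows "P \<in> Omega W le (f 0)" and "progressive_from W le (f 0) P" and "f 0 \<notin> P"
proof -
  have f: "f n \<in> W" "le (f n) (f (Suc n))" "f n \<noteq> f (Suc n)" for n
    using chain unfolding strict_ascending_chain_def by auto
  show "P \<in> Omega W le (f 0)"
    unfolding P_def Omega_def up_def using poset_on_trans[OF po] f(1) by blast
  show "f 0 \<notin> P"
    unfolding P_def using poset_on_refl[OF po f(1)] by blast
  show "progressive_from W le (f 0) P"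
    unfolding progressive_from_def
  proof (intro ballI impI)
    fix x assume x: "x \<in> W" "le (f 0) x" and above: "strict_up W le x \<subseteq> P"
    show "x \<in> P"
    proof (rule ccontr)
      assume "x \<notin> P"
      then obtain n where le_n: "le x (f n)" using x unfolding P_def up_def by blast
      have "le x (f (Suc n))" using poset_on_trans[OF po x(1) f(1) f(1) le_n f(2)] .
      moreover have "f (Suc n) \<noteq> x"
      proof
        assume "f (Suc n) = x"
        with le_n have "le (f (Suc n)) (f n)" by simp
        then have "f n = f (Suc n)" by (rule poset_on_antisym[OF po f(1) f(1) f(2)])
        with f(3) show False ..
      qed
      ultimately have "f (Suc n) \<in> strict_up W le x" unfolding strict_up_def using f(1) by blast
      then show False
        using above poset_on_refl[OF po f(1)] unfolding P_def by blast
    qed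
  qed
qed

lemma progressive_induction_iff_no_strict_ascending_chain:
  assumes po: "poset_on W le"
  shows "(\<forall>u\<in>W. \<forall>P\<in>Omega W le u. progressive_from W le u P \<longrightarrow> u \<in> P) \<longleftrightarrow>
    (\<nexists>f. strict_ascending_chain W le f)"
proof
  assume induction: "\<forall>u\<in>W. \<forall>P\<in>Omega W le u. progressive_from W le u P \<longrightarrow> u \<in> P"
  show "\<nexists>f. strict_ascending_chain W le f"
  proof
    assume "\<exists>f. strict_ascending_chain W le f"
    then obtain f where chain: "strict_ascending_chain W le f" ..
    then have "f 0 \<in> W" unfolding strict_ascending_chain_def by blast
    then show False
      using induction strict_ascending_chain_refutes_progressive_induction[OF po chain] by blast
  qed
qed (use progressive_induct[OF po] in blast)

theorem theorem5p13:
  fixes W :: "'a set" and le :: "'a \<Rightarrow> 'a \<Rightarrow> bool"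
  assumes "poset_on W le"
  shows "presheaf_topos_scattered W le \<longleftrightarrow>
    \<not> (\<exists>f :: nat \<Rightarrow> 'a. \<forall>n. f n \<in> W \<and> le (f n) (f (Suc n)) \<and> f n \<noteq> f (Suc n))"
  using presheaf_topos_scattered_iff_progressive_induction[OF assms]
    progressive_induction_iff_no_strict_ascending_chain[OF assms]
  unfolding strict_ascending_chain_def by (rule trans)

end
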